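(* Let $a,b,e\in\mathbb Z$ with $a\neq 0$, $e>0$, such that $h_2(j)=aj^2+bj+e$ satisfies $h_2(j)\ge 0$ for all integers $j\ge 0$ (so $h_2\in\mathcal H_0$; necessarily $a>0$). Let $\alpha=a/e$, $\beta=b/e$. If $\alpha+\beta<2$, then $\operatorname{hdepth}(h_2)=c(h_2)$. If $\alpha+\beta\ge 2$, then $\operatorname{hdepth}(h_2)\ge 2$.
   Context: Let $\mathcal H_0$ denote the set of functions $h:\mathbb Z_{\ge 0}\to\mathbb Z_{\ge 0}$ with $h(0)>0$. For $h\in\mathcal H_0$ and integers $0\le k\le d$, put $\beta_k^d(h)=\sum_{j=0}^k(-1)^{k-j}\binom{d-j}{k-j}h(j)$. The Hilbert depth of $h$ is $\operatorname{hdepth}(h)=\max\{d\in\mathbb Z_{\ge0}:\ \beta_k^d(h)\ge 0\text{ for all }0\le k\le d\}$; this set contains $d=0$ and is known to be bounded above by $c(h):=\lfloor h(1)/h(0)\rfloor$, so the maximum exists. Note $c(h_2)=\lfloor\alpha+\beta\rfloor+1$. *)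

theory Defs
  imports Complex_Main
begin

definition hbeta :: "nat \<Rightarrow> nat \<Rightarrow> (nat \<Rightarrow> int) \<Rightarrow> int" where
  "hbeta k d h = (\<Sum>j=0..k. (-1) ^ (k - j) * int ((d - j) choose (k - j)) * h j)"

definition hdepth :: "(nat \<Rightarrow> int) \<Rightarrow> nat" where
  "hdepth h = Max {d. \<forall>k\<le>d. hbeta k d h \<ge> 0}"

definition cbound :: "(nat \<Rightarrow> int) \<Rightarrow> int" where
  "cbound h = \<lfloor>(of_int (h 1) :: real) / of_int (h 0)\<rfloor>"

end

theory Submission
  imports Defs
begin

text \<open>Only the first three values of \<open>h\<^sub>2\<close> matter. Since \<open>\<beta>\<^sub>1\<^sup>d = h(1) - d h(0)\<close>, every
  admissible \<open>d\<close> is at most \<open>c(h)\<close>; conversely all \<open>\<beta>\<^sub>k\<^sup>1\<close> and \<open>\<beta>\<^sub>k\<^sup>2\<close> are nonnegative as soon as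
  \<open>d \<le> c(h)\<close> for \<open>d = 1, 2\<close>, the only extra condition being \<open>\<beta>\<^sub>2\<^sup>2 = h(0) - h(1) + h(2) \<ge> 0\<close>.
  For \<open>h\<^sub>2\<close> this quantity is \<open>2a + h\<^sub>2(1) \<ge> 0\<close>, and \<open>\<alpha> + \<beta> < 2\<close> means \<open>h\<^sub>2(1) < 3 h\<^sub>2(0)\<close>,
  i.e. \<open>c(h\<^sub>2) \<le> 2\<close>.\<close>

lemma hbeta_0: "hbeta 0 d h = h 0"
  by (simp add: hbeta_def)

text \<open>Stated with \<open>Suc 0\<close> rather than \<open>1\<close>, the simplifier's normal form for both arguments.\<close>

lemma hbeta_1: "hbeta (Suc 0) d h = h (Suc 0) - int d * h 0"
  by (simp add: hbeta_def)

lemma hbeta_2_2: "hbeta 2 2 h = h 0 - h 1 + h 2"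
  by (simp add: hbeta_def numeral_2_eq_2)

lemma le_cbound_iff:
  assumes "h 0 > 0"
  shows "int d \<le> cbound h \<longleftrightarrow> int d * h 0 \<le> h 1"
proof -
  have "int d \<le> cbound h \<longleftrightarrow> real_of_int (int d) \<le> real_of_int (h 1) / real_of_int (h 0)"
    unfolding cbound_def by (rule le_floor_iff)
  also have "\<dots> \<longleftrightarrow> real_of_int (int d * h 0) \<le> real_of_int (h 1)"
    using assms by (simp add: le_divide_eq)
  finally show ?thesis by linarith
qed

lemma admissible_depth_le_cbound:
  assumes "h 0 > 0" and "h 1 \<ge> 0" and "\<forall>k\<le>d. hbeta k d h \<ge> 0"
  shows "int d \<le> cbound h"
proof (cases d)
  case 0
  then show ?thesis using assms(2) le_cbound_iff[of h 0, OF assms(1)] by simp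
next
  case (Suc n)
  then have "hbeta 1 d h \<ge> 0" using assms(3) by simp
  then show ?thesis using le_cbound_iff[of h d, OF assms(1)] by (simp add: hbeta_1)
qed

lemma finite_admissible_depths:
  assumes "h 0 > 0"
  shows "finite {d. \<forall>k\<le>d. hbeta k d h \<ge> 0}"
proof (rule finite_subset)
  show "{d. \<forall>k\<le>d. hbeta k d h \<ge> 0} \<subseteq> {..nat (h 1)}"
  proof
    fix d assume d: "d \<in> {d. \<forall>k\<le>d. hbeta k d h \<ge> 0}"
    show "d \<in> {..nat (h 1)}"
    proof (cases "d = 0")
      case False
      then have "hbeta 1 d h \<ge> 0" using d by simp
      then have "int d * h 0 \<le> h 1" by (simp add: hbeta_1)
      moreover have "int d \<le> int d * h 0" using assms by (simp add: mult_le_cancel_left1)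
      ultimately have "int d \<le> h 1" by linarith
      then show ?thesis by simp
    qed simp
  qed
qed simp

lemma le_hdepth:
  assumes "h 0 > 0" and "\<forall>k\<le>d. hbeta k d h \<ge> 0"
  shows "d \<le> hdepth h"
  unfolding hdepth_def using finite_admissible_depths[of h, OF assms(1)] assms(2) by simp

lemma hdepth_le_cbound:
  assumes "h 0 > 0" and "h 1 \<ge> 0"
  shows "int (hdepth h) \<le> cbound h"
proof -
  have "0 \<in> {d. \<forall>k\<le>d. hbeta k d h \<ge> 0}" using assms(1) by (simp add: hbeta_0)
  then have "hdepth h \<in> {d. \<forall>k\<le>d. hbeta k d h \<ge> 0}"
    unfolding hdepth_def using finite_admissible_depths[of h, OF assms(1)] by (intro Max_in) auto
  then show ?thesis using admissible_depth_le_cbound[OF assms] by simp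
qed

lemma hdepth_ge_1:
  assumes "h 0 > 0" and "h 0 \<le> h 1"
  shows "1 \<le> hdepth h"
proof (rule le_hdepth[of h, OF assms(1)], intro allI impI)
  fix k :: nat assume "k \<le> 1"
  then consider "k = 0" | "k = 1" by linarith
  then show "hbeta k 1 h \<ge> 0" by cases (use assms in \<open>simp_all add: hbeta_0 hbeta_1\<close>)
qed

lemma hdepth_ge_2:
  assumes "h 0 > 0" and "2 * h 0 \<le> h 1" and "h 0 - h 1 + h 2 \<ge> 0"
  shows "2 \<le> hdepth h"
proof (rule le_hdepth[of h, OF assms(1)], intro allI impI)
  fix k :: nat assume "k \<le> 2"
  then consider "k = 0" | "k = 1" | "k = 2" by linarith
  then show "hbeta k 2 h \<ge> 0"
    by cases (use assms in \<open>simp_all add: hbeta_0 hbeta_1 hbeta_2_2\<close>)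
qed

lemma hdepth_eq_cbound_if_cbound_le_2:
  assumes "h 0 > 0" and "h 1 \<ge> 0" and "h 0 - h 1 + h 2 \<ge> 0" and "cbound h \<le> 2"
  shows "int (hdepth h) = cbound h"
proof -
  have "0 \<le> cbound h" using assms(1,2) le_cbound_iff[of h 0] by simp
  then consider "cbound h = 0" | "cbound h = 1" | "cbound h = 2" using assms(4) by linarith
  then have "cbound h \<le> int (hdepth h)"
  proof cases
    case 2
    then have "1 \<le> hdepth h" using assms(1) le_cbound_iff[of h 1] hdepth_ge_1 by simp
    then show ?thesis using 2 by simp
  next
    case 3
    then have "2 \<le> hdepth h" using assms le_cbound_iff[of h 2] hdepth_ge_2 by simp
    then show ?thesis using 3 by simp
  qed simp
  then show ?thesis using hdepth_le_cbound[OF assms(1,2)] by simp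
qed

lemma nonneg_quadratic_leading_coeff_nonneg:
  fixes a b e :: int
  assumes "\<forall>j::nat. a * int j ^ 2 + b * int j + e \<ge> 0"
  shows "a \<ge> 0"
proof (rule ccontr)
  assume "\<not> a \<ge> 0"
  then have "a \<le> -1" by simp
  define j where "j = nat (\<bar>b\<bar> + \<bar>e\<bar> + 1)"
  have j: "int j = \<bar>b\<bar> + \<bar>e\<bar> + 1" by (simp add: j_def)
  have "a * int j ^ 2 \<le> - (int j ^ 2)" using mult_right_mono[OF \<open>a \<le> -1\<close>, of "int j ^ 2"] by simp
  moreover have "b * int j \<le> \<bar>b\<bar> * int j" by (simp add: mult_right_mono)
  moreover have "- (int j ^ 2) + \<bar>b\<bar> * int j = - int j * (\<bar>e\<bar> + 1)"
    by (simp add: j power2_eq_square algebra_simps)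
  moreover have "int j * (\<bar>e\<bar> + 1) \<ge> \<bar>e\<bar> + 1" using j by simp
  ultimately have "a * int j ^ 2 + b * int j + e < 0" by linarith
  then show False using assms by (meson not_le)
qed

theorem lemma2p2:
  fixes a b e :: int
  assumes "a \<noteq> 0" and "e > 0"
    and "\<forall>j::nat. a * int j ^ 2 + b * int j + e \<ge> 0"
  shows "(real_of_int a / real_of_int e + real_of_int b / real_of_int e < 2 \<longrightarrow>
            int (hdepth (\<lambda>j. a * int j ^ 2 + b * int j + e)) = cbound (\<lambda>j. a * int j ^ 2 + b * int j + e))
       \<and> (real_of_int a / real_of_int e + real_of_int b / real_of_int e \<ge> 2 \<longrightarrow>
            hdepth (\<lambda>j. a * int j ^ 2 + b * int j + e) \<ge> 2)"
proof -
  define h where "h = (\<lambda>j::nat. a * int j ^ 2 + b * int j + e)"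
  have h0: "h 0 = e" and h1: "h 1 = a + b + e" and h2: "h 2 = 4 * a + 2 * b + e"
    by (simp_all add: h_def)
  have "h 1 \<ge> 0" using assms(3)[rule_format, of 1] by (simp add: h_def)
  have "h 0 - h 1 + h 2 = 2 * a + h 1" unfolding h0 h1 h2 by simp
  then have "h 0 - h 1 + h 2 \<ge> 0" using nonneg_quadratic_leading_coeff_nonneg[OF assms(3)] \<open>h 1 \<ge> 0\<close>
    by simp
  have alpha_beta: "real_of_int a / real_of_int e + real_of_int b / real_of_int e < 2 \<longleftrightarrow> h 1 < 3 * h 0"
  proof -
    have "real_of_int a / real_of_int e + real_of_int b / real_of_int e < 2 \<longleftrightarrow> a + b < 2 * e"
      using assms(2) by (simp add: divide_less_eq flip: add_divide_distrib) linarith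
    then show ?thesis unfolding h0 h1 by linarith
  qed
  show ?thesis
    unfolding h_def[symmetric] alpha_beta not_less[symmetric, of 2 "_ + _"]
  proof (intro conjI impI)
    assume "h 1 < 3 * h 0"
    then have "cbound h \<le> 2" using le_cbound_iff[of h 3] assms(2) h0 by auto
    then show "int (hdepth h) = cbound h"
      using hdepth_eq_cbound_if_cbound_le_2 assms(2) h0 \<open>h 1 \<ge> 0\<close> \<open>h 0 - h 1 + h 2 \<ge> 0\<close> by simp
  next
    assume "\<not> h 1 < 3 * h 0"
    then show "2 \<le> hdepth h" using hdepth_ge_2 assms(2) h0 \<open>h 0 - h 1 + h 2 \<ge> 0\<close> by simp
  qed
qed

end
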